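(* Let $G$ be a graph of order $n$ with no isolated vertex. Then $G$ is $3$-$\gamma_{\rm tg}$-critical if and only if all of the following hold: (a) $G$ is open twin-free; (b) $G$ has no dominating vertex; (c) for every vertex $v$ of $G$ of degree at most $n-3$, there exists a vertex $u$ of degree $n-2$ that is not adjacent to $v$.
   Context: Open twin-free: no two distinct vertices have the same open neighborhood. A dominating vertex is adjacent to all other vertices. Total domination game: Dominator and Staller alternately choose vertices, each chosen vertex must be adjacent to some vertex not yet totally dominated; the game ends when no legal move exists; Dominator minimizes, Staller maximizes the number of moves; $\gamma_{\rm tg}(G)$ is the number of moves in the Dominator-start game under optimal play. $G|v$ is $G$ with $v$ declared already totally dominated, with $\gamma_{\rm tg}(G|v)$ defined analogously. $G$ is $3$-$\gamma_{\rm tg}$-critical if $\gamma_{\rm tg}(G)=3$ and $\gamma_{\rm tg}(G|v)<3$ for every vertex $v$. *)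

theory Defs
  imports Main
begin

text \<open>Simple graph: finite vertex set V, symmetric irreflexive adjacency E (only its
restriction to V matters).\<close>

definition simple_graph :: "'a set \<Rightarrow> ('a \<Rightarrow> 'a \<Rightarrow> bool) \<Rightarrow> bool" where
  "simple_graph V E \<longleftrightarrow> finite V \<and> V \<noteq> {} \<and> (\<forall>u v. E u v \<longrightarrow> E v u) \<and> (\<forall>v. \<not> E v v)"

definition nbhd :: "'a set \<Rightarrow> ('a \<Rightarrow> 'a \<Rightarrow> bool) \<Rightarrow> 'a \<Rightarrow> 'a set" where
  "nbhd V E v = {u \<in> V. E v u}"

definition deg :: "'a set \<Rightarrow> ('a \<Rightarrow> 'a \<Rightarrow> bool) \<Rightarrow> 'a \<Rightarrow> nat" where
  "deg V E v = card (nbhd V E v)"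

definition no_isolated :: "'a set \<Rightarrow> ('a \<Rightarrow> 'a \<Rightarrow> bool) \<Rightarrow> bool" where
  "no_isolated V E \<longleftrightarrow> (\<forall>v\<in>V. \<exists>u\<in>V. E v u)"

definition open_twin_free :: "'a set \<Rightarrow> ('a \<Rightarrow> 'a \<Rightarrow> bool) \<Rightarrow> bool" where
  "open_twin_free V E \<longleftrightarrow> (\<forall>u\<in>V. \<forall>v\<in>V. u \<noteq> v \<longrightarrow> nbhd V E u \<noteq> nbhd V E v)"

definition dominating_vertex :: "'a set \<Rightarrow> ('a \<Rightarrow> 'a \<Rightarrow> bool) \<Rightarrow> 'a \<Rightarrow> bool" where
  "dominating_vertex V E v \<longleftrightarrow> v \<in> V \<and> (\<forall>u\<in>V. u \<noteq> v \<longrightarrow> E v u)"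

text \<open>Value of the total domination game from a position where D is the set of
already totally dominated vertices; the Boolean says whether it is Dominator's turn. The first argument is fuel:
every move totally dominates a new vertex of V, so fuel card V suffices.\<close>

fun tg_val :: "nat \<Rightarrow> 'a set \<Rightarrow> ('a \<Rightarrow> 'a \<Rightarrow> bool) \<Rightarrow> bool \<Rightarrow> 'a set \<Rightarrow> nat" where
  "tg_val 0 V E t D = 0"
| "tg_val (Suc k) V E t D =
     (let M = {x \<in> V. \<not> nbhd V E x \<subseteq> D} in
      if M = {} then 0
      else if t then Min ((\<lambda>x. Suc (tg_val k V E False (D \<union> nbhd V E x))) ` M)
      else Max ((\<lambda>x. Suc (tg_val k V E True (D \<union> nbhd V E x))) ` M))"

definition gamma_tg :: "'a set \<Rightarrow> ('a \<Rightarrow> 'a \<Rightarrow> bool) \<Rightarrow> nat" where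
  "gamma_tg V E = tg_val (card V) V E True {}"

text \<open>gamma_tg(G|v): Dominator-start game with v declared already totally dominated.\<close>
definition gamma_tg_pre :: "'a set \<Rightarrow> ('a \<Rightarrow> 'a \<Rightarrow> bool) \<Rightarrow> 'a \<Rightarrow> nat" where
  "gamma_tg_pre V E v = tg_val (card V) V E True {v}"

definition tg_critical3 :: "'a set \<Rightarrow> ('a \<Rightarrow> 'a \<Rightarrow> bool) \<Rightarrow> bool" where
  "tg_critical3 V E \<longleftrightarrow> gamma_tg V E = 3 \<and> (\<forall>v\<in>V. gamma_tg_pre V E v < 3)"

end

theory Submission imports Defs begin

text \<open>Every move totally dominates a new vertex, so from a position in which D is already
totally dominated at most |V - D| moves remain. Hence Dominator finishes in 2 moves by opening
with a dominating vertex, in 3 moves by opening with a vertex of degree n - 2, and in G|v in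
2 moves by opening with a vertex of degree n - 2 not adjacent to v (v itself qualifies if its
degree is n - 2). Conversely, in an open twin-free graph any two vertices are separated by some
open neighbourhood; while two vertices remain undominated, Staller plays such a neighbourhood,
leaving one of them undominated and forcing another move. This gives gamma_tg(G) \<ge> 3, and in
G|v it forces Dominator's optimal opening to leave at most one vertex undominated, i.e. to have
degree n - 2 and not be adjacent to v. Finally, open twins u, v make G|v play exactly like G,
since every move that totally dominates v also totally dominates u.\<close>

lemma nbhd_subset: "nbhd V E x \<subseteq> V"
  by (auto simp: nbhd_def)

lemma simple_graph_finite: "simple_graph V E \<Longrightarrow> finite V"
  by (simp add: simple_graph_def)

lemma simple_graph_irrefl: "simple_graph V E \<Longrightarrow> \<not> E a a"
  by (simp add: simple_graph_def)

lemma simple_graph_mem_nbhd_commute: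
  "simple_graph V E \<Longrightarrow> a \<in> V \<Longrightarrow> b \<in> V \<Longrightarrow> a \<in> nbhd V E b \<longleftrightarrow> b \<in> nbhd V E a"
  by (auto simp: simple_graph_def nbhd_def)

lemma card_Diff_nbhd: "finite V \<Longrightarrow> card (V - nbhd V E x) = card V - deg V E x"
  by (simp add: deg_def card_Diff_subset finite_subset[OF nbhd_subset] nbhd_subset)

lemma no_isolated_obtain_neighbour:
  assumes "simple_graph V E" "no_isolated V E" "a \<in> V"
  obtains z where "z \<in> V" "a \<in> nbhd V E z"
proof -
  obtain z where "z \<in> V" "E a z" using assms(2,3) by (auto simp: no_isolated_def)
  then show ?thesis using that assms(1) by (auto simp: simple_graph_def nbhd_def assms(3))
qed

lemma no_isolated_nbhd_nonempty:
  "no_isolated V E \<Longrightarrow> x \<in> V \<Longrightarrow> nbhd V E x \<noteq> {}"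
  by (auto simp: no_isolated_def nbhd_def)

lemma deg_add_2_le_card:
  assumes sg: "simple_graph V E" and "x \<in> V" "\<not> dominating_vertex V E x"
  shows "deg V E x + 2 \<le> card V"
proof -
  obtain w where "w \<in> V" "w \<noteq> x" "\<not> E x w"
    using assms(2,3) by (auto simp: dominating_vertex_def)
  then have "{x, w} \<subseteq> V - nbhd V E x"
    using assms(2) simple_graph_irrefl[OF sg] by (auto simp: nbhd_def)
  then have "2 \<le> card (V - nbhd V E x)"
    using \<open>w \<noteq> x\<close> simple_graph_finite[OF sg] by (metis card_2_iff card_mono finite_Diff)
  moreover have "deg V E x \<le> card V"
    unfolding deg_def using simple_graph_finite[OF sg] by (simp add: card_mono nbhd_subset)
  ultimately show ?thesis
    using card_Diff_nbhd[OF simple_graph_finite[OF sg]] by simp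
qed

lemma three_le_card_if_no_dominating_vertex:
  assumes sg: "simple_graph V E" and ni: "no_isolated V E"
    and nd: "\<not> (\<exists>v\<in>V. dominating_vertex V E v)"
  shows "3 \<le> card V"
proof -
  obtain x where x: "x \<in> V" using sg by (auto simp: simple_graph_def)
  have "nbhd V E x \<noteq> {}" using ni x by (rule no_isolated_nbhd_nonempty)
  then have "1 \<le> deg V E x"
    unfolding deg_def using simple_graph_finite[OF sg]
    by (simp add: Suc_leI card_gt_0_iff finite_subset[OF nbhd_subset])
  with deg_add_2_le_card[OF sg x] nd x show ?thesis by auto
qed

lemma open_twin_free_separating_nbhd:
  assumes sg: "simple_graph V E" and "open_twin_free V E" "a \<in> V" "b \<in> V" "a \<noteq> b"
  shows "\<exists>y\<in>V. \<exists>c\<in>{a, b}. \<exists>d\<in>{a, b}. c \<in> nbhd V E y \<and> d \<notin> nbhd V E y"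
proof -
  have "nbhd V E a \<noteq> nbhd V E b" using assms(2-5) by (auto simp: open_twin_free_def)
  then obtain y where y: "y \<in> nbhd V E a \<and> y \<notin> nbhd V E b \<or> y \<in> nbhd V E b \<and> y \<notin> nbhd V E a"
    unfolding set_eq_iff by blast
  then have "y \<in> V" by (auto simp: nbhd_def)
  have "a \<in> nbhd V E y \<longleftrightarrow> y \<in> nbhd V E a" "b \<in> nbhd V E y \<longleftrightarrow> y \<in> nbhd V E b"
    using simple_graph_mem_nbhd_commute[OF sg \<open>y \<in> V\<close>] assms(3,4) by auto
  then show ?thesis using y \<open>y \<in> V\<close> by blast
qed

lemma tg_val_le_card_Diff:
  assumes "finite V"
  shows "tg_val k V E t D \<le> card (V - D)"
proof (induction k arbitrary: t D)
  case 0
  show ?case by simp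
next
  case (Suc k)
  define M where "M = {x \<in> V. \<not> nbhd V E x \<subseteq> D}"
  have move: "Suc (tg_val k V E t' (D \<union> nbhd V E x)) \<le> card (V - D)" if "x \<in> M" for x t'
  proof -
    have "V - (D \<union> nbhd V E x) \<subset> V - D" using that by (auto simp: M_def nbhd_def)
    then have "card (V - (D \<union> nbhd V E x)) < card (V - D)"
      using assms by (meson finite_Diff psubset_card_mono)
    then show ?thesis using Suc.IH[of t' "D \<union> nbhd V E x"] by simp
  qed
  have "finite M" using assms by (simp add: M_def)
  then show ?case using move by (auto simp: Let_def M_def[symmetric] Min_le_iff)
qed

lemma tg_val_Dominator_le:
  assumes "finite V" "x \<in> V" "\<not> nbhd V E x \<subseteq> D"
  shows "tg_val (Suc k) V E True D \<le> Suc (tg_val k V E False (D \<union> nbhd V E x))"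
  using assms by (auto simp: Let_def intro!: Min_le)

lemma tg_val_Dominator_optimal_move:
  assumes "finite V" "x \<in> V" "\<not> nbhd V E x \<subseteq> D"
  obtains y where "y \<in> V" "\<not> nbhd V E y \<subseteq> D"
    and "tg_val (Suc k) V E True D = Suc (tg_val k V E False (D \<union> nbhd V E y))"
proof -
  let ?M = "{x \<in> V. \<not> nbhd V E x \<subseteq> D}"
  let ?value = "\<lambda>x. Suc (tg_val k V E False (D \<union> nbhd V E x))"
  have "Min (?value ` ?M) \<in> ?value ` ?M"
    using assms by (intro Min_in) auto
  then obtain y where y: "y \<in> ?M" and "Min (?value ` ?M) = ?value y"
    by blast
  moreover have "tg_val (Suc k) V E True D = Min (?value ` ?M)"
    using assms by (auto simp: Let_def)
  ultimately show ?thesis by (intro that[of y]) (simp_all del: tg_val.simps)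
qed

lemma tg_val_Staller_ge:
  assumes "finite V" "y \<in> V" "\<not> nbhd V E y \<subseteq> D"
  shows "Suc (tg_val k V E True (D \<union> nbhd V E y)) \<le> tg_val (Suc k) V E False D"
  using assms by (auto simp: Let_def intro!: Max_ge)

lemma tg_val_pos:
  assumes "finite V" "z \<in> V" "\<not> nbhd V E z \<subseteq> D"
  shows "1 \<le> tg_val (Suc k) V E t D"
  using assms by (cases t) (auto simp: Let_def intro!: Max_ge_iff[THEN iffD2])

lemma tg_val_insert_open_twin:
  assumes sg: "simple_graph V E" and uv: "u \<in> V" "v \<in> V" "u \<noteq> v"
    and twins: "nbhd V E u = nbhd V E v"
  shows "(u \<in> D \<longleftrightarrow> v \<in> D) \<Longrightarrow> tg_val k V E t (insert v D) = tg_val k V E t D"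
proof (induction k arbitrary: t D)
  case 0
  show ?case by simp
next
  case (Suc k)
  have hits_v_iff_hits_u: "v \<in> nbhd V E x \<longleftrightarrow> u \<in> nbhd V E x" if "x \<in> V" for x
    using twins simple_graph_mem_nbhd_commute[OF sg that] uv by auto
  have moves: "{x \<in> V. \<not> nbhd V E x \<subseteq> insert v D} = {x \<in> V. \<not> nbhd V E x \<subseteq> D}"
    using hits_v_iff_hits_u Suc.prems \<open>u \<noteq> v\<close> by blast
  have after_move: "tg_val k V E t' (insert v D \<union> nbhd V E x) = tg_val k V E t' (D \<union> nbhd V E x)"
    if "x \<in> V" for x t'
    using Suc.IH[of "D \<union> nbhd V E x" t'] hits_v_iff_hits_u[OF that] Suc.prems by simp
  have after_moves:
    "(\<lambda>x. Suc (tg_val k V E t' (insert v D \<union> nbhd V E x))) ` {x \<in> V. \<not> nbhd V E x \<subseteq> D}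
     = (\<lambda>x. Suc (tg_val k V E t' (D \<union> nbhd V E x))) ` {x \<in> V. \<not> nbhd V E x \<subseteq> D}" for t'
    by (rule image_cong) (simp_all del: Un_insert_left add: after_move)
  show ?case
    by (simp only: tg_val.simps Let_def moves after_moves)
qed

lemma gamma_tg_pre_open_twin:
  assumes "simple_graph V E" "u \<in> V" "v \<in> V" "u \<noteq> v" "nbhd V E u = nbhd V E v"
  shows "gamma_tg_pre V E v = gamma_tg V E"
  unfolding gamma_tg_pre_def gamma_tg_def
  using tg_val_insert_open_twin[OF assms, of "{}"] by simp

lemma two_le_tg_val_Staller:
  assumes sg: "simple_graph V E" and ni: "no_isolated V E" and otf: "open_twin_free V E"
    and ab: "a \<in> V - D" "b \<in> V - D" "a \<noteq> b"
  shows "2 \<le> tg_val (Suc (Suc k)) V E False D"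
proof -
  have fin: "finite V" using sg by (rule simple_graph_finite)
  obtain y c d where y: "y \<in> V" and cd: "c \<in> {a, b}" "d \<in> {a, b}"
    and split: "c \<in> nbhd V E y" "d \<notin> nbhd V E y"
    using open_twin_free_separating_nbhd[OF sg otf _ _ \<open>a \<noteq> b\<close>] ab by blast
  obtain z where z: "z \<in> V" "d \<in> nbhd V E z"
    using no_isolated_obtain_neighbour[OF sg ni] cd ab by blast
  have "1 \<le> tg_val (Suc k) V E True (D \<union> nbhd V E y)"
    using z split cd ab by (intro tg_val_pos[OF fin z(1)]) auto
  moreover have "Suc (tg_val (Suc k) V E True (D \<union> nbhd V E y)) \<le> tg_val (Suc (Suc k)) V E False D"
    using split cd ab by (intro tg_val_Staller_ge[OF fin y]) auto
  ultimately show ?thesis by simp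
qed

lemma tg_val_card_le_opening:
  assumes "finite V" "x \<in> V" "\<not> nbhd V E x \<subseteq> D"
  shows "tg_val (card V) V E True D \<le> Suc (card (V - (D \<union> nbhd V E x)))"
proof -
  have "card V = Suc (card V - 1)" using assms(1,2) by (cases "card V") (auto simp: card_eq_0_iff)
  then have "tg_val (card V) V E True D \<le> Suc (tg_val (card V - 1) V E False (D \<union> nbhd V E x))"
    by (metis tg_val_Dominator_le[OF assms])
  also have "\<dots> \<le> Suc (card (V - (D \<union> nbhd V E x)))"
    using tg_val_le_card_Diff[OF assms(1)] by simp
  finally show ?thesis .
qed

definition near_dominating_vertex :: "'a set \<Rightarrow> ('a \<Rightarrow> 'a \<Rightarrow> bool) \<Rightarrow> 'a \<Rightarrow> bool" where
  "near_dominating_vertex V E u \<longleftrightarrow> u \<in> V \<and> deg V E u + 2 = card V"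

lemma near_dominating_vertex_card_Diff_nbhd:
  assumes "finite V" "near_dominating_vertex V E x"
  shows "card (V - nbhd V E x) = 2"
proof -
  have "deg V E x + 2 = card V" using assms(2) by (simp add: near_dominating_vertex_def)
  then show ?thesis using card_Diff_nbhd[OF assms(1), of E x] by linarith
qed

lemma gamma_tg_le_2_if_dominating_vertex:
  assumes sg: "simple_graph V E" and ni: "no_isolated V E" and x: "dominating_vertex V E x"
  shows "gamma_tg V E \<le> 2"
proof -
  have fin: "finite V" and xV: "x \<in> V"
    using sg x by (auto simp: simple_graph_finite dominating_vertex_def)
  have "\<not> nbhd V E x \<subseteq> {}" using no_isolated_nbhd_nonempty[OF ni xV] by blast
  then have "gamma_tg V E \<le> Suc (card (V - ({} \<union> nbhd V E x)))"
    unfolding gamma_tg_def by (rule tg_val_card_le_opening[OF fin xV])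
  moreover have "V - ({} \<union> nbhd V E x) = {x}"
    using x simple_graph_irrefl[OF sg] by (auto simp: dominating_vertex_def nbhd_def)
  ultimately show ?thesis by simp
qed

lemma gamma_tg_le_3_if_near_dominating_vertex:
  assumes sg: "simple_graph V E" and ni: "no_isolated V E" and x: "near_dominating_vertex V E x"
  shows "gamma_tg V E \<le> 3"
proof -
  have fin: "finite V" and xV: "x \<in> V"
    using sg x by (auto simp: simple_graph_finite near_dominating_vertex_def)
  have "\<not> nbhd V E x \<subseteq> {}" using no_isolated_nbhd_nonempty[OF ni xV] by blast
  then have "gamma_tg V E \<le> Suc (card (V - ({} \<union> nbhd V E x)))"
    unfolding gamma_tg_def by (rule tg_val_card_le_opening[OF fin xV])
  then show ?thesis using near_dominating_vertex_card_Diff_nbhd[OF fin x] by simp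
qed

lemma gamma_tg_pre_le_2_if_near_dominating_non_neighbour:
  assumes sg: "simple_graph V E" and ni: "no_isolated V E" and v: "v \<in> V"
    and x: "near_dominating_vertex V E x" "\<not> E x v"
  shows "gamma_tg_pre V E v \<le> 2"
proof -
  have fin: "finite V" and xV: "x \<in> V"
    using sg x by (auto simp: simple_graph_finite near_dominating_vertex_def)
  have "v \<in> V - nbhd V E x" using v x(2) by (simp add: nbhd_def)
  moreover have "V - ({v} \<union> nbhd V E x) = (V - nbhd V E x) - {v}" by blast
  ultimately have card_one: "card (V - ({v} \<union> nbhd V E x)) = 1"
    using near_dominating_vertex_card_Diff_nbhd[OF fin x(1)] by simp
  have "\<not> nbhd V E x \<subseteq> {v}"
    using no_isolated_nbhd_nonempty[OF ni xV] x(2) by (auto simp: nbhd_def)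
  then have "gamma_tg_pre V E v \<le> Suc (card (V - ({v} \<union> nbhd V E x)))"
    unfolding gamma_tg_pre_def by (rule tg_val_card_le_opening[OF fin xV])
  then show ?thesis using card_one by simp
qed

lemma three_le_gamma_tg:
  assumes sg: "simple_graph V E" and ni: "no_isolated V E" and otf: "open_twin_free V E"
    and nd: "\<not> (\<exists>v\<in>V. dominating_vertex V E v)"
  shows "3 \<le> gamma_tg V E"
proof -
  have fin: "finite V" using sg by (rule simple_graph_finite)
  have "3 \<le> card V" using sg ni nd by (rule three_le_card_if_no_dominating_vertex)
  then obtain k where k: "card V = Suc (Suc (Suc k))" by (intro that[of "card V - 3"]) simp
  obtain z where z: "z \<in> V" using sg by (auto simp: simple_graph_def)
  have "\<not> nbhd V E z \<subseteq> {}" using no_isolated_nbhd_nonempty[OF ni z] by blast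
  then obtain x where x: "x \<in> V" "\<not> nbhd V E x \<subseteq> {}"
    and opt: "gamma_tg V E = Suc (tg_val (Suc (Suc k)) V E False ({} \<union> nbhd V E x))"
    unfolding gamma_tg_def k using tg_val_Dominator_optimal_move[OF fin z] by metis
  obtain w where w: "w \<in> V" "w \<noteq> x" "\<not> E x w"
    using nd x(1) by (auto simp: dominating_vertex_def)
  have "2 \<le> tg_val (Suc (Suc k)) V E False ({} \<union> nbhd V E x)"
    using x(1) w simple_graph_irrefl[OF sg]
    by (intro two_le_tg_val_Staller[OF sg ni otf, of x _ w]) (auto simp: nbhd_def)
  then show ?thesis using opt by simp
qed

lemma near_dominating_non_neighbour_if_gamma_tg_pre_le_2:
  assumes sg: "simple_graph V E" and ni: "no_isolated V E" and otf: "open_twin_free V E"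
    and nd: "\<not> (\<exists>v\<in>V. dominating_vertex V E v)"
    and v: "v \<in> V" and pre: "gamma_tg_pre V E v \<le> 2"
  shows "\<exists>x. near_dominating_vertex V E x \<and> \<not> E x v"
proof -
  have fin: "finite V" using sg by (rule simple_graph_finite)
  have "3 \<le> card V" using sg ni nd by (rule three_le_card_if_no_dominating_vertex)
  then obtain k where k: "card V = Suc (Suc (Suc k))" by (intro that[of "card V - 3"]) simp
  have "\<not> nbhd V E v \<subseteq> {v}"
    using no_isolated_nbhd_nonempty[OF ni v] simple_graph_irrefl[OF sg] by (auto simp: nbhd_def)
  then obtain x where x: "x \<in> V" "\<not> nbhd V E x \<subseteq> {v}"
    and opt: "gamma_tg_pre V E v = Suc (tg_val (Suc (Suc k)) V E False ({v} \<union> nbhd V E x))"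
    unfolding gamma_tg_pre_def k using tg_val_Dominator_optimal_move[OF fin v] by metis
  have le1: "card (V - ({v} \<union> nbhd V E x)) \<le> 1"
  proof (rule ccontr)
    assume "\<not> ?thesis"
    then obtain a b where "a \<in> V - ({v} \<union> nbhd V E x)" "b \<in> V - ({v} \<union> nbhd V E x)" "a \<noteq> b"
      by (metis card_le_Suc0_iff_eq finite_Diff fin One_nat_def)
    then have "2 \<le> tg_val (Suc (Suc k)) V E False ({v} \<union> nbhd V E x)"
      by (rule two_le_tg_val_Staller[OF sg ni otf])
    then show False using opt pre by simp
  qed
  have deg_x: "deg V E x + 2 \<le> card V" using deg_add_2_le_card[OF sg x(1)] nd x(1) by blast
  then have two: "2 \<le> card (V - nbhd V E x)" using card_Diff_nbhd[OF fin, of E x] by linarith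
  have v_out: "v \<in> V - nbhd V E x"
  proof (rule ccontr)
    assume "v \<notin> V - nbhd V E x"
    then have "V - ({v} \<union> nbhd V E x) = V - nbhd V E x" by blast
    then show False using le1 two by simp
  qed
  have "V - ({v} \<union> nbhd V E x) = (V - nbhd V E x) - {v}" by blast
  then have "card (V - ({v} \<union> nbhd V E x)) = card (V - nbhd V E x) - 1"
    using v_out fin by simp
  then have "card V - deg V E x = 2" using le1 two card_Diff_nbhd[OF fin, of E x] by linarith
  then have "near_dominating_vertex V E x" using x(1) deg_x by (simp add: near_dominating_vertex_def)
  moreover have "\<not> E x v" using v_out by (simp add: nbhd_def)
  ultimately show ?thesis by blast
qed

lemma degree_condition_iff_near_dominating_non_neighbour:
  assumes sg: "simple_graph V E" and nd: "\<not> (\<exists>v\<in>V. dominating_vertex V E v)"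
  shows "(\<forall>v\<in>V. deg V E v + 3 \<le> card V \<longrightarrow> (\<exists>u\<in>V. deg V E u + 2 = card V \<and> \<not> E u v))
    \<longleftrightarrow> (\<forall>v\<in>V. \<exists>u. near_dominating_vertex V E u \<and> \<not> E u v)"
proof
  assume low: "\<forall>v\<in>V. deg V E v + 3 \<le> card V \<longrightarrow> (\<exists>u\<in>V. deg V E u + 2 = card V \<and> \<not> E u v)"
  show "\<forall>v\<in>V. \<exists>u. near_dominating_vertex V E u \<and> \<not> E u v"
  proof
    fix v assume v: "v \<in> V"
    show "\<exists>u. near_dominating_vertex V E u \<and> \<not> E u v"
    proof (cases "deg V E v + 3 \<le> card V")
      case True
      then show ?thesis using low v by (auto simp: near_dominating_vertex_def)
    next
      case False
      then have "near_dominating_vertex V E v"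
        using deg_add_2_le_card[OF sg v] nd v by (auto simp: near_dominating_vertex_def)
      then show ?thesis using simple_graph_irrefl[OF sg] by blast
    qed
  qed
qed (auto simp: near_dominating_vertex_def)

lemma tg_critical3_imp_conditions:
  assumes sg: "simple_graph V E" and ni: "no_isolated V E" and crit: "tg_critical3 V E"
  shows "open_twin_free V E" and "\<not> (\<exists>v\<in>V. dominating_vertex V E v)"
    and "\<forall>v\<in>V. \<exists>u. near_dominating_vertex V E u \<and> \<not> E u v"
proof -
  have g3: "gamma_tg V E = 3" and pre: "\<forall>v\<in>V. gamma_tg_pre V E v \<le> 2"
    using crit by (auto simp: tg_critical3_def)
  show otf: "open_twin_free V E"
    unfolding open_twin_free_def
  proof (intro ballI impI notI)
    fix u v assume "u \<in> V" "v \<in> V" "u \<noteq> v" "nbhd V E u = nbhd V E v"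
    then have "gamma_tg_pre V E v = 3" using gamma_tg_pre_open_twin[OF sg] g3 by simp
    then show False using pre \<open>v \<in> V\<close> by auto
  qed
  show nd: "\<not> (\<exists>v\<in>V. dominating_vertex V E v)"
    using g3 gamma_tg_le_2_if_dominating_vertex[OF sg ni] by auto
  show "\<forall>v\<in>V. \<exists>u. near_dominating_vertex V E u \<and> \<not> E u v"
    using pre near_dominating_non_neighbour_if_gamma_tg_pre_le_2[OF sg ni otf nd] by blast
qed

lemma conditions_imp_tg_critical3:
  assumes sg: "simple_graph V E" and ni: "no_isolated V E" and otf: "open_twin_free V E"
    and nd: "\<not> (\<exists>v\<in>V. dominating_vertex V E v)"
    and missed: "\<forall>v\<in>V. \<exists>u. near_dominating_vertex V E u \<and> \<not> E u v"
  shows "tg_critical3 V E"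
proof -
  have "V \<noteq> {}" using sg by (simp add: simple_graph_def)
  then obtain u where "near_dominating_vertex V E u" using missed by blast
  then have "gamma_tg V E \<le> 3" by (rule gamma_tg_le_3_if_near_dominating_vertex[OF sg ni])
  then have "gamma_tg V E = 3" using three_le_gamma_tg[OF sg ni otf nd] by simp
  moreover have "gamma_tg_pre V E v < 3" if v: "v \<in> V" for v
  proof -
    obtain x where "near_dominating_vertex V E x" "\<not> E x v" using missed v by blast
    then have "gamma_tg_pre V E v \<le> 2"
      by (rule gamma_tg_pre_le_2_if_near_dominating_non_neighbour[OF sg ni v])
    then show ?thesis by simp
  qed
  ultimately show ?thesis by (simp add: tg_critical3_def)
qed

theorem theorem4p6:
  fixes V :: "'a set" and E :: "'a \<Rightarrow> 'a \<Rightarrow> bool" and n :: nat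
  assumes "simple_graph V E" and "n = card V" and "no_isolated V E"
  shows "tg_critical3 V E \<longleftrightarrow>
           open_twin_free V E
         \<and> \<not> (\<exists>v\<in>V. dominating_vertex V E v)
         \<and> (\<forall>v\<in>V. deg V E v + 3 \<le> n \<longrightarrow>
               (\<exists>u\<in>V. deg V E u + 2 = n \<and> \<not> E u v))"
proof -
  have "tg_critical3 V E \<longleftrightarrow> open_twin_free V E \<and> \<not> (\<exists>v\<in>V. dominating_vertex V E v)
      \<and> (\<forall>v\<in>V. \<exists>u. near_dominating_vertex V E u \<and> \<not> E u v)"
    using tg_critical3_imp_conditions[OF assms(1,3)] conditions_imp_tg_critical3[OF assms(1,3)]
    by blast
  then show ?thesis
    using degree_condition_iff_near_dominating_non_neighbour[OF assms(1)] assms(2) by blast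
qed

end
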